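(* Let $m\ge2$, $w$ an infinite periodic or Sturmian word over $\{0,1\}$, and $A=A(m,w)$ with the $\mathbb{Z}_2$-grading in which $z_1^{(1)},a$ are even and $b$ is odd. Then there is $n_0$ such that $c_{k,n-k}(A)\le 2n^2$ for all $n\ge n_0$ and all $0\le k\le n$.
   Context: $F$ is a field of characteristic zero. $A(m,w)$: basis $\{a,b,z_j^{(i)}: i\ge1,1\le j\le m+w_i\}$, products $z_j^{(i)}a=z_{j+1}^{(i)}$ for $j<m+w_i$, $z_{m+w_i}^{(i)}b=z_1^{(i+1)}$, all other products zero. The grading: $A_0=\mathrm{span}\{a,z_j^{(i)}:i\text{ odd}\}$, $A_1=\mathrm{span}\{b,z_j^{(i)}:i\text{ even}\}$. Sturmian: exactly $n+1$ distinct subwords of length $n$ for all $n$. $c_{k,n-k}(A)=\dim P_{k,n-k}/(P_{k,n-k}\cap Id^{gr}(A))$, where $P_{k,n-k}$ is the space of polynomials in the free nonassociative algebra multilinear in even variables $x_1,\dots,x_k$ and odd variables $y_1,\dots,y_{n-k}$, and $Id^{gr}(A)$ is the ideal of graded identities of $A$ (polynomials vanishing whenever even variables take values in $A_0$ and odd in $A_1$). *)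

theory Defs
  imports Main "HOL-Library.Multiset"
begin

text \<open>Basis indices: a, b, and z_j^(i) (written Z i j).\<close>
datatype bidx = Ba | Bb | Z nat nat

definition valid_basis :: "nat \<Rightarrow> (nat \<Rightarrow> nat) \<Rightarrow> bidx \<Rightarrow> bool" where
  "valid_basis m w s = (case s of Ba \<Rightarrow> True | Bb \<Rightarrow> True
      | Z i j \<Rightarrow> 1 \<le> i \<and> 1 \<le> j \<and> j \<le> m + w i)"

text \<open>Product of basis elements (None means the product is zero).\<close>
fun bprod :: "nat \<Rightarrow> (nat \<Rightarrow> nat) \<Rightarrow> bidx \<Rightarrow> bidx \<Rightarrow> bidx option" where
  "bprod m w (Z i j) Ba = (if j < m + w i then Some (Z i (j + 1)) else None)"
| "bprod m w (Z i j) Bb = (if j = m + w i then Some (Z (i + 1) 1) else None)"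
| "bprod m w _ _ = None"

definition supp :: "(bidx \<Rightarrow> 'f::field) \<Rightarrow> bidx set" where
  "supp u = {s. u s \<noteq> 0}"

definition Aelem :: "nat \<Rightarrow> (nat \<Rightarrow> nat) \<Rightarrow> (bidx \<Rightarrow> 'f::field) set" where
  "Aelem m w = {u. finite (supp u) \<and> (\<forall>s\<in>supp u. valid_basis m w s)}"

definition amult :: "nat \<Rightarrow> (nat \<Rightarrow> nat) \<Rightarrow> (bidx \<Rightarrow> 'f::field) \<Rightarrow> (bidx \<Rightarrow> 'f) \<Rightarrow> (bidx \<Rightarrow> 'f)" where
  "amult m w u v = (\<lambda>t. \<Sum>(s, r) \<in> supp u \<times> supp v.
      if bprod m w s r = Some t then u s * v r else 0)"

definition A0 :: "nat \<Rightarrow> (nat \<Rightarrow> nat) \<Rightarrow> (bidx \<Rightarrow> 'f::field) set" where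
  "A0 m w = {u \<in> Aelem m w. \<forall>s\<in>supp u. s = Ba \<or> (\<exists>i j. s = Z i j \<and> odd i)}"

definition A1 :: "nat \<Rightarrow> (nat \<Rightarrow> nat) \<Rightarrow> (bidx \<Rightarrow> 'f::field) set" where
  "A1 m w = {u \<in> Aelem m w. \<forall>s\<in>supp u. s = Bb \<or> (\<exists>i j. s = Z i j \<and> even i)}"

definition binary_word :: "(nat \<Rightarrow> nat) \<Rightarrow> bool" where
  "binary_word w = (\<forall>i\<ge>1. w i \<in> {0, 1})"

text \<open>The word is w_1 w_2 w_3 ... (index 0 unused).\<close>
definition periodic_word :: "(nat \<Rightarrow> nat) \<Rightarrow> bool" where
  "periodic_word w = (\<exists>p>0. \<forall>i\<ge>1. w (i + p) = w i)"

definition subwords :: "(nat \<Rightarrow> nat) \<Rightarrow> nat \<Rightarrow> nat list set" where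
  "subwords w n = {map w [i..<i + n] | i. i \<ge> 1}"

definition sturmian :: "(nat \<Rightarrow> nat) \<Rightarrow> bool" where
  "sturmian w = (\<forall>n. finite (subwords w n) \<and> card (subwords w n) = n + 1)"

text \<open>Variables: even x_i (X i), odd y_i (Y i).  Nonassociative monomials are binary trees.\<close>
datatype var = X nat | Y nat
datatype mon = Leaf var | Node mon mon

fun leaves :: "mon \<Rightarrow> var list" where
  "leaves (Leaf v) = [v]"
| "leaves (Node l r) = leaves l @ leaves r"

definition Mons :: "nat \<Rightarrow> nat \<Rightarrow> mon set" where
  "Mons k l = {M. mset (leaves M) = mset (map X [1..<k + 1] @ map Y [1..<l + 1])}"

definition Pspace :: "'f itself \<Rightarrow> nat \<Rightarrow> nat \<Rightarrow> (mon \<Rightarrow> 'f::field) set" where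
  "Pspace F k l = {f. \<forall>M. f M \<noteq> 0 \<longrightarrow> M \<in> Mons k l}"

fun eval_mon :: "nat \<Rightarrow> (nat \<Rightarrow> nat) \<Rightarrow> (nat \<Rightarrow> bidx \<Rightarrow> 'f::field) \<Rightarrow> (nat \<Rightarrow> bidx \<Rightarrow> 'f)
    \<Rightarrow> mon \<Rightarrow> bidx \<Rightarrow> 'f" where
  "eval_mon m w \<phi> \<psi> (Leaf (X i)) = \<phi> i"
| "eval_mon m w \<phi> \<psi> (Leaf (Y i)) = \<psi> i"
| "eval_mon m w \<phi> \<psi> (Node M N) = amult m w (eval_mon m w \<phi> \<psi> M) (eval_mon m w \<phi> \<psi> N)"

definition eval_poly :: "nat \<Rightarrow> (nat \<Rightarrow> nat) \<Rightarrow> nat \<Rightarrow> nat \<Rightarrow> (mon \<Rightarrow> 'f::field)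
    \<Rightarrow> (nat \<Rightarrow> bidx \<Rightarrow> 'f) \<Rightarrow> (nat \<Rightarrow> bidx \<Rightarrow> 'f) \<Rightarrow> bidx \<Rightarrow> 'f" where
  "eval_poly m w k l f \<phi> \<psi> = (\<lambda>t. \<Sum>M\<in>Mons k l. f M * eval_mon m w \<phi> \<psi> M t)"

definition is_gr_identity :: "nat \<Rightarrow> (nat \<Rightarrow> nat) \<Rightarrow> nat \<Rightarrow> nat \<Rightarrow> (mon \<Rightarrow> 'f::field) \<Rightarrow> bool" where
  "is_gr_identity m w k l f =
     (\<forall>\<phi> \<psi>. (\<forall>i. \<phi> i \<in> A0 m w) \<longrightarrow> (\<forall>i. \<psi> i \<in> A1 m w) \<longrightarrow>
        eval_poly m w k l f \<phi> \<psi> = (\<lambda>_. 0))"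

definition indep_mod_id :: "nat \<Rightarrow> (nat \<Rightarrow> nat) \<Rightarrow> nat \<Rightarrow> nat \<Rightarrow> (mon \<Rightarrow> 'f::field) set \<Rightarrow> bool" where
  "indep_mod_id m w k l S =
     (\<forall>c :: (mon \<Rightarrow> 'f) \<Rightarrow> 'f.
        is_gr_identity m w k l (\<lambda>M. \<Sum>f\<in>S. c f * f M) \<longrightarrow> (\<forall>f\<in>S. c f = 0))"

text \<open>c_{k,l}(A) = dim P_{k,l} / (P_{k,l} \<inter> Id^gr(A)).\<close>
definition gr_codim :: "'f::field itself \<Rightarrow> nat \<Rightarrow> (nat \<Rightarrow> nat) \<Rightarrow> nat \<Rightarrow> nat \<Rightarrow> nat" where
  "gr_codim F m w k l =
     Max {card S | S :: (mon \<Rightarrow> 'f) set. finite S \<and> S \<subseteq> Pspace F k l \<and> indep_mod_id m w k l S}"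

end

theory Submission
  imports Defs "HOL-Library.Function_Algebras" "HOL.Vector_Spaces"
begin

text \<open>Under a graded substitution the even variables take values in span{a, z^(i) : i odd} and
the odd ones in span{b, z^(i) : i even}. Every nonzero product of basis elements has the form
z\<cdot>a or z\<cdot>b, so a multilinear monomial evaluates to zero unless it is left normed, and a
left-normed monomial h r_1 \<dots> r_(n-1) evaluates to the product of the a- resp. b-coefficients of
the r_i times the value of h multiplied successively by a or b according to the parities of
the r_i. Its value therefore depends only on its key: the head variable together with the parity
word of r_1 \<dots> r_(n-1). A nonzero value also forces this parity word to be a path word of A, i.e.
the sequence of generators carrying some z_j^(i) along the chain
z_1^(i), \<dots>, z_(m+w_i)^(i), z_1^(i+1), \<dots>; such a word is determined by j \<le> m + 1 and the
factor of w of length (n - 1) div m + 2 starting at position i. Hence P_(k,n-k) modulo the graded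
identities is spanned by at most n (m + 1) p(q) classes, p(q) the number of factors of w of
length q = (n - 1) div m + 2. This is at most n (m + 1) p for a word of period p and
n (m + 1) (q + 1) for a Sturmian word, both below 2 n^2 for large n.\<close>

section \<open>Counting classes via coordinates\<close>

interpretation fun_vs: vector_space "\<lambda>(c::'f::field) (v::'k \<Rightarrow> 'f). (\<lambda>x. c * v x)"
  by unfold_locales (auto simp: fun_eq_iff algebra_simps)

lemma sum_fun_apply: "(sum f A) x = (\<Sum>a\<in>A. f a x)"
  by (induction A rule: infinite_finite_induct) auto

lemma card_le_card_coordinates:
  fixes coord :: "('a \<Rightarrow> 'f::field) \<Rightarrow> 'k \<Rightarrow> 'f" and ident :: "('a \<Rightarrow> 'f) \<Rightarrow> bool"
  assumes G: "finite G" and S: "finite S"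
    and coord_outside: "\<And>f \<kappa>. \<kappa> \<notin> G \<Longrightarrow> coord f \<kappa> = 0"
    and coord_lincomb: "\<And>c. coord (\<lambda>M. \<Sum>f\<in>S. c f * f M) = (\<lambda>\<kappa>. \<Sum>f\<in>S. c f * coord f \<kappa>)"
    and ident: "\<And>g. coord g = (\<lambda>_. 0) \<Longrightarrow> ident g"
    and indep: "\<And>c. ident (\<lambda>M. \<Sum>f\<in>S. c f * f M) \<Longrightarrow> \<forall>f\<in>S. c f = 0"
  shows "card S \<le> card G"
proof -
  have coords_indep: "\<forall>f\<in>S. c f = 0" if "\<And>\<kappa>. (\<Sum>f\<in>S. c f * coord f \<kappa>) = 0" for c
    using that by (intro indep ident) (simp add: coord_lincomb fun_eq_iff)
  have inj: "inj_on coord S"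
  proof (rule inj_onI, rule ccontr)
    fix f g assume f: "f \<in> S" and g: "g \<in> S" and eq: "coord f = coord g" and "f \<noteq> g"
    define c where "c h = (if h = f then 1 else if h = g then -1 else (0::'f))" for h
    have "(\<Sum>h\<in>S. c h * coord h \<kappa>) = (\<Sum>h\<in>{f, g}. c h * coord h \<kappa>)" for \<kappa>
      by (rule sum.mono_neutral_right) (use S f g in \<open>auto simp: c_def\<close>)
    then have "(\<Sum>h\<in>S. c h * coord h \<kappa>) = 0" for \<kappa>
      using \<open>f \<noteq> g\<close> eq by (simp add: c_def)
    with f coords_indep have "c f = 0" by blast
    then show False by (simp add: c_def)
  qed
  have indep_coords: "fun_vs.independent (coord ` S)"
    unfolding fun_vs.dependent_explicit
  proof (intro notI, elim exE conjE bexE)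
    fix T u v assume T: "finite T" "T \<subseteq> coord ` S" and sum0: "(\<Sum>v\<in>T. (\<lambda>x. u v * v x)) = 0"
      and "v \<in> T" and "u v \<noteq> 0"
    define S' where "S' = {h\<in>S. coord h \<in> T}"
    define c where "c h = (if h \<in> S' then u (coord h) else 0)" for h
    have bij: "bij_betw coord S' T"
      using T inj by (auto simp: bij_betw_def S'_def intro: inj_on_subset)
    have "(\<Sum>h\<in>S. c h * coord h \<kappa>) = 0" for \<kappa>
    proof -
      have "(\<Sum>h\<in>S. c h * coord h \<kappa>) = (\<Sum>h\<in>S'. u (coord h) * coord h \<kappa>)"
        by (rule sum.mono_neutral_cong_right) (use S in \<open>auto simp: c_def S'_def\<close>)
      also have "\<dots> = (\<Sum>v\<in>T. u v * v \<kappa>)"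
        using sum.reindex_bij_betw[OF bij, of "\<lambda>v. u v * v \<kappa>"] .
      also have "\<dots> = 0"
        using fun_cong[OF sum0, of \<kappa>] by (simp add: sum_fun_apply)
      finally show ?thesis .
    qed
    then have "\<forall>h\<in>S. c h = 0" by (rule coords_indep)
    moreover obtain h where "h \<in> S'" "coord h = v" using bij \<open>v \<in> T\<close> by (auto simp: bij_betw_def)
    ultimately show False using \<open>u v \<noteq> 0\<close> by (auto simp: c_def S'_def)
  qed
  define B where "B = (\<lambda>\<kappa> x. if x = \<kappa> then (1::'f) else 0) ` G"
  have span: "coord ` S \<subseteq> fun_vs.span B"
  proof
    fix v assume "v \<in> coord ` S"
    then have "v = (\<Sum>\<kappa>\<in>G. (\<lambda>x. v \<kappa> * (if x = \<kappa> then 1 else 0)))"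
      using G coord_outside by (auto simp: fun_eq_iff sum_fun_apply if_distrib cong: if_cong)
    also have "\<dots> \<in> fun_vs.span B"
      by (intro fun_vs.span_sum fun_vs.span_scale fun_vs.span_base) (auto simp: B_def)
    finally show "v \<in> fun_vs.span B" .
  qed
  have "card S = card (coord ` S)" using inj by (simp add: card_image)
  also have "\<dots> \<le> card B"
    using fun_vs.independent_span_bound[OF _ indep_coords span] G by (simp add: B_def)
  also have "\<dots> \<le> card G" unfolding B_def using G by (rule card_image_le)
  finally show ?thesis .
qed

abbreviation generator :: "bool \<Rightarrow> bidx" where
  "generator c \<equiv> if c then Ba else Bb"

lemma bprod_Some_imp_Z: "bprod m w s r = Some t \<Longrightarrow> \<exists>i j. t = Z i j"
  by (cases s; cases r) (auto split: if_splits)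

lemma bprod_right_Z [simp]: "bprod m w s (Z i j) = None"
  by (cases s) auto

lemma amult_nonzero_imp_Z:
  assumes "amult m w u v t \<noteq> 0"
  shows "\<exists>i j. t = Z i j"
proof (rule ccontr)
  assume "\<nexists>i j. t = Z i j"
  then have "amult m w u v t = 0"
    unfolding amult_def by (intro sum.neutral) (auto dest: bprod_Some_imp_Z)
  with assms show False by simp
qed

lemma amult_right_Z: "\<forall>r\<in>supp v. \<exists>i j. r = Z i j \<Longrightarrow> amult m w u v = (\<lambda>_. 0)"
  unfolding amult_def by (rule ext, rule sum.neutral) auto

lemma amult_zero_left: "amult m w (\<lambda>_. 0) v = (\<lambda>_. 0)"
  unfolding amult_def supp_def by simp

definition rmult_gen :: "nat \<Rightarrow> (nat \<Rightarrow> nat) \<Rightarrow> bool \<Rightarrow> (bidx \<Rightarrow> 'f::field) \<Rightarrow> bidx \<Rightarrow> 'f" where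
  "rmult_gen m w c u = (\<lambda>t. \<Sum>s\<in>supp u. if bprod m w s (generator c) = Some t then u s else 0)"

lemma amult_right_single:
  assumes "finite (supp v)" and "\<forall>r\<in>supp v. r = c \<or> (\<exists>i j. r = Z i j)"
  shows "amult m w u v t = v c * (\<Sum>s\<in>supp u. if bprod m w s c = Some t then u s else 0)"
proof -
  have "amult m w u v t = (\<Sum>s\<in>supp u. \<Sum>r\<in>supp v. if bprod m w s r = Some t then u s * v r else 0)"
    unfolding amult_def by (simp add: sum.cartesian_product)
  also have "\<dots> = (\<Sum>s\<in>supp u. \<Sum>r\<in>supp v. if r = c then (if bprod m w s c = Some t then u s * v c else 0) else 0)"
    using assms(2) by (intro sum.cong refl) auto
  also have "\<dots> = (\<Sum>s\<in>supp u. if bprod m w s c = Some t then u s * v c else 0)"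
    using assms(1) by simp (auto simp: supp_def intro!: sum.cong)
  also have "\<dots> = v c * (\<Sum>s\<in>supp u. if bprod m w s c = Some t then u s else 0)"
    by (simp add: sum_distrib_left if_distrib mult.commute cong: if_cong)
  finally show ?thesis .
qed

lemma amult_A0_right: "v \<in> A0 m w \<Longrightarrow> amult m w u v = (\<lambda>t. v Ba * rmult_gen m w True u t)"
  unfolding rmult_gen_def if_True by (rule ext, rule amult_right_single) (auto simp: A0_def Aelem_def)

lemma amult_A1_right: "v \<in> A1 m w \<Longrightarrow> amult m w u v = (\<lambda>t. v Bb * rmult_gen m w False u t)"
  unfolding rmult_gen_def if_False by (rule ext, rule amult_right_single) (auto simp: A1_def Aelem_def)

lemma supp_scale: "supp (\<lambda>t. a * u t) = (if a = 0 then {} else supp u)"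
  by (auto simp: supp_def)

lemma rmult_gen_scale: "rmult_gen m w c (\<lambda>t. a * u t) = (\<lambda>t. a * rmult_gen m w c u t)"
  by (cases "a = 0") (simp_all add: rmult_gen_def supp_scale sum_distrib_left if_distrib cong: if_cong)

lemma rmult_gen_nonzero:
  assumes "rmult_gen m w c u t \<noteq> 0"
  obtains s where "s \<in> supp u" and "bprod m w s (generator c) = Some t"
proof -
  from assms obtain s where "s \<in> supp u" "(if bprod m w s (generator c) = Some t then u s else 0) \<noteq> 0"
    unfolding rmult_gen_def by (rule sum.not_neutral_contains_not_neutral)
  then show ?thesis using that by (auto split: if_splits)
qed

definition rmult_gens :: "nat \<Rightarrow> (nat \<Rightarrow> nat) \<Rightarrow> bool list \<Rightarrow> (bidx \<Rightarrow> 'f::field) \<Rightarrow> bidx \<Rightarrow> 'f" where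
  "rmult_gens m w cs u = fold (rmult_gen m w) cs u"

lemma rmult_gens_simps:
  "rmult_gens m w [] u = u"
  "rmult_gens m w (c # cs) u = rmult_gens m w cs (rmult_gen m w c u)"
  "rmult_gens m w (cs @ [c]) u = rmult_gen m w c (rmult_gens m w cs u)"
  by (simp_all add: rmult_gens_def)

fun basis_rmult_gens :: "nat \<Rightarrow> (nat \<Rightarrow> nat) \<Rightarrow> bidx \<Rightarrow> bool list \<Rightarrow> bidx option" where
  "basis_rmult_gens m w s [] = Some s"
| "basis_rmult_gens m w s (c # cs) =
     (case bprod m w s (generator c) of None \<Rightarrow> None | Some s' \<Rightarrow> basis_rmult_gens m w s' cs)"

lemma rmult_gens_nonzero:
  "rmult_gens m w cs u t \<noteq> 0 \<Longrightarrow> \<exists>s\<in>supp u. basis_rmult_gens m w s cs = Some t"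
proof (induction cs arbitrary: u)
  case Nil
  then show ?case by (auto simp: rmult_gens_simps supp_def)
next
  case (Cons c cs)
  then obtain s' where s': "s' \<in> supp (rmult_gen m w c u)" "basis_rmult_gens m w s' cs = Some t"
    by (auto simp: rmult_gens_simps)
  then obtain s where "s \<in> supp u" "bprod m w s (generator c) = Some s'"
    by (auto simp: supp_def elim: rmult_gen_nonzero)
  with s' show ?case by force
qed

fun is_even_var :: "var \<Rightarrow> bool" where
  "is_even_var (X _) = True"
| "is_even_var (Y _) = False"

fun var_value :: "(nat \<Rightarrow> bidx \<Rightarrow> 'f::field) \<Rightarrow> (nat \<Rightarrow> bidx \<Rightarrow> 'f) \<Rightarrow> var \<Rightarrow> bidx \<Rightarrow> 'f" where
  "var_value \<phi> \<psi> (X i) = \<phi> i"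
| "var_value \<phi> \<psi> (Y i) = \<psi> i"

lemma eval_mon_Leaf [simp]: "eval_mon m w \<phi> \<psi> (Leaf v) = var_value \<phi> \<psi> v"
  by (cases v) simp_all

definition gen_coeff :: "(nat \<Rightarrow> bidx \<Rightarrow> 'f::field) \<Rightarrow> (nat \<Rightarrow> bidx \<Rightarrow> 'f) \<Rightarrow> var \<Rightarrow> 'f" where
  "gen_coeff \<phi> \<psi> v = var_value \<phi> \<psi> v (generator (is_even_var v))"

lemma amult_var_value_right:
  assumes "\<forall>i. \<phi> i \<in> A0 m w" and "\<forall>i. \<psi> i \<in> A1 m w"
  shows "amult m w u (var_value \<phi> \<psi> v) = (\<lambda>t. gen_coeff \<phi> \<psi> v * rmult_gen m w (is_even_var v) u t)"
  using assms by (cases v) (simp_all add: gen_coeff_def amult_A0_right amult_A1_right)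

lemma var_value_Aelem:
  "\<forall>i. \<phi> i \<in> A0 m w \<Longrightarrow> \<forall>i. \<psi> i \<in> A1 m w \<Longrightarrow> var_value \<phi> \<psi> v \<in> Aelem m w"
  by (cases v) (auto simp: A0_def A1_def)

fun left_normed_form :: "mon \<Rightarrow> (var \<times> var list) option" where
  "left_normed_form (Leaf v) = Some (v, [])"
| "left_normed_form (Node l (Leaf v)) = map_option (\<lambda>(h, r). (h, r @ [v])) (left_normed_form l)"
| "left_normed_form (Node l (Node _ _)) = None"

lemma leaves_left_normed_form: "left_normed_form M = Some (h, r) \<Longrightarrow> leaves M = h # r"
  by (induction M arbitrary: h r rule: left_normed_form.induct) auto

lemma eval_mon_not_left_normed:
  "left_normed_form M = None \<Longrightarrow> eval_mon m w \<phi> \<psi> M = (\<lambda>_. 0)"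
proof (induction M rule: left_normed_form.induct)
  case (2 l v)
  then show ?case by (simp add: amult_zero_left)
next
  case (3 l M N)
  have "\<forall>s\<in>supp (eval_mon m w \<phi> \<psi> (Node M N)). \<exists>i j. s = Z i j"
    using amult_nonzero_imp_Z by (fastforce simp: supp_def)
  then show ?case by (simp add: amult_right_Z)
qed simp

lemma eval_mon_left_normed:
  assumes \<phi>: "\<forall>i. \<phi> i \<in> A0 m w" and \<psi>: "\<forall>i. \<psi> i \<in> A1 m w"
  shows "left_normed_form M = Some (h, r) \<Longrightarrow> eval_mon m w \<phi> \<psi> M =
    (\<lambda>t. prod_list (map (gen_coeff \<phi> \<psi>) r) * rmult_gens m w (map is_even_var r) (var_value \<phi> \<psi> h) t)"
proof (induction M arbitrary: r rule: left_normed_form.induct)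
  case (1 v)
  then show ?case by (simp add: rmult_gens_simps)
next
  case (2 l v)
  then obtain r0 where l: "left_normed_form l = Some (h, r0)" and r: "r = r0 @ [v]" by auto
  let ?c = "gen_coeff \<phi> \<psi>" and ?p = "is_even_var"
  have "eval_mon m w \<phi> \<psi> (Node l (Leaf v)) = (\<lambda>t. ?c v * rmult_gen m w (?p v) (eval_mon m w \<phi> \<psi> l) t)"
    by (simp add: amult_var_value_right[OF \<phi> \<psi>])
  also have "\<dots> = (\<lambda>t. ?c v * (prod_list (map ?c r0) *
      rmult_gen m w (?p v) (rmult_gens m w (map ?p r0) (var_value \<phi> \<psi> h)) t))"
    by (simp only: "2.IH"[OF l] rmult_gen_scale)
  also have "\<dots> = (\<lambda>t. prod_list (map ?c r) * rmult_gens m w (map ?p r) (var_value \<phi> \<psi> h) t)"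
  proof -
    have "prod_list (map ?c r) = prod_list (map ?c r0) * ?c v" using r by simp
    moreover have "rmult_gens m w (map ?p r) (var_value \<phi> \<psi> h)
        = rmult_gen m w (?p v) (rmult_gens m w (map ?p r0) (var_value \<phi> \<psi> h))"
      using r by (simp only: rmult_gens_simps map_append list.map)
    ultimately show ?thesis by (simp only: ac_simps)
  qed
  finally show ?case .
qed simp

section \<open>Path words\<close>

text \<open>The generators (True for a, False for b) by which z_j^(i) can be multiplied L times
in succession without the product vanishing.\<close>

fun path_word :: "nat \<Rightarrow> (nat \<Rightarrow> nat) \<Rightarrow> nat \<Rightarrow> nat \<Rightarrow> nat \<Rightarrow> bool list" where
  "path_word m w i j 0 = []"
| "path_word m w i j (Suc L) =
     (if j < m + w i then True # path_word m w i (j + 1) L else False # path_word m w (i + 1) 1 L)"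

definition path_words :: "nat \<Rightarrow> (nat \<Rightarrow> nat) \<Rightarrow> nat \<Rightarrow> bool list set" where
  "path_words m w L = {path_word m w i j L | i j. 1 \<le> i \<and> 1 \<le> j \<and> j \<le> m + 1}"

lemma basis_rmult_gens_Z_eq_path_word:
  "1 \<le> m \<Longrightarrow> j \<le> m + w i \<Longrightarrow> basis_rmult_gens m w (Z i j) cs \<noteq> None \<Longrightarrow>
    cs = path_word m w i j (length cs)"
proof (induction cs arbitrary: i j)
  case (Cons c cs)
  show ?case
  proof (cases "j < m + w i")
    case True
    with Cons.prems have c and "basis_rmult_gens m w (Z i (j + 1)) cs \<noteq> None"
      by (cases c; simp)+
    with Cons.IH[of "j + 1" i] Cons.prems(1) True show ?thesis by simp
  next
    case False
    with Cons.prems have j: "j = m + w i" by simp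
    with Cons.prems have "\<not> c" and "basis_rmult_gens m w (Z (i + 1) 1) cs \<noteq> None"
      by (cases c; simp)+
    with Cons.IH[of 1 "i + 1"] Cons.prems(1) j show ?thesis by simp
  qed
qed simp

lemma basis_rmult_gens_in_path_words:
  assumes "1 \<le> m" and "binary_word w" and "valid_basis m w s" and "basis_rmult_gens m w s cs \<noteq> None"
  shows "cs \<in> path_words m w (length cs)"
proof (cases s)
  case (Z i j)
  with assms(2,3) have ij: "1 \<le> i" "1 \<le> j" "j \<le> m + w i" and "w i \<le> 1"
    by (auto simp: valid_basis_def binary_word_def)
  with assms(1,4) Z have "cs = path_word m w i j (length cs)"
    by (simp add: basis_rmult_gens_Z_eq_path_word)
  moreover have "j \<le> m + 1" using ij(3) \<open>w i \<le> 1\<close> by simp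
  ultimately show ?thesis using ij unfolding path_words_def by blast
next
  case Ba
  with assms(4) have "cs = path_word m w 1 1 0" by (cases cs) auto
  then show ?thesis by (force simp: path_words_def)
next
  case Bb
  with assms(4) have "cs = path_word m w 1 1 0" by (cases cs) auto
  then show ?thesis by (force simp: path_words_def)
qed

lemma path_word_cong:
  "(\<And>d. m * d < L + j \<Longrightarrow> w (i + d) = w (i' + d)) \<Longrightarrow> path_word m w i j L = path_word m w i' j L"
proof (induction L arbitrary: i i' j)
  case (Suc L)
  have wi: "w i = w i'" using Suc.prems[of 0] by simp
  show ?case
  proof (cases "j < m + w i")
    case True
    have "path_word m w i (j + 1) L = path_word m w i' (j + 1) L"
      by (rule Suc.IH) (use Suc.prems in auto)
    with True wi show ?thesis by simp
  next
    case False
    have "path_word m w (i + 1) 1 L = path_word m w (i' + 1) 1 L"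
    proof (rule Suc.IH)
      fix d assume "m * d < L + 1"
      with False have "m * (d + 1) < Suc L + j" by simp
      with Suc.prems show "w (i + 1 + d) = w (i' + 1 + d)" by (metis add.assoc add.commute)
    qed
    with False wi show ?thesis by simp
  qed
qed simp

lemma less_div_add_2: "0 < (m::nat) \<Longrightarrow> m * d < L + m + 1 \<Longrightarrow> d < L div m + 2"
proof (cases d)
  case (Suc e)
  assume "0 < m" and "m * d < L + m + 1"
  with Suc have "e \<le> L div m" by (simp add: less_eq_div_iff_mult_less_eq algebra_simps)
  with Suc show ?thesis by simp
qed simp

text \<open>So a path word of length L is determined by j and a factor of w of length
L div m + 2.\<close>

lemma finite_card_path_words:
  assumes m: "m \<ge> 1" and fin: "finite (subwords w (L div m + 2))"
  shows "finite (path_words m w L) \<and> card (path_words m w L) \<le> (m + 1) * card (subwords w (L div m + 2))"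
proof -
  define q where "q = L div m + 2"
  define pos where "pos u = (SOME i. 1 \<le> i \<and> map w [i..<i + q] = u)" for u
  let ?D = "{1..m + 1} \<times> subwords w q"
  have sub: "path_words m w L \<subseteq> (\<lambda>(j, u). path_word m w (pos u) j L) ` ?D"
  proof
    fix cs assume "cs \<in> path_words m w L"
    then obtain i j where ij: "1 \<le> i" "1 \<le> j" "j \<le> m + 1" and cs: "cs = path_word m w i j L"
      by (auto simp: path_words_def)
    define u where "u = map w [i..<i + q]"
    have u: "u \<in> subwords w q" using ij by (auto simp: u_def subwords_def)
    have pos: "map w [pos u..<pos u + q] = u"
      unfolding pos_def by (rule someI2[of _ i]) (use ij in \<open>auto simp: u_def\<close>)
    have "cs = path_word m w (pos u) j L"
    proof (unfold cs, rule path_word_cong)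
      fix d assume "m * d < L + j"
      with ij(3) have "m * d < L + m + 1" by linarith
      with m have "d < q" unfolding q_def by (intro less_div_add_2) auto
      then have "w (i + d) = u ! d" and "w (pos u + d) = map w [pos u..<pos u + q] ! d"
        by (simp_all add: u_def)
      with pos show "w (i + d) = w (pos u + d)" by simp
    qed
    with ij u show "cs \<in> (\<lambda>(j, u). path_word m w (pos u) j L) ` ?D" by force
  qed
  have "finite ?D" using fin by (simp add: q_def)
  with sub have "finite (path_words m w L)" by (meson finite_imageI finite_subset)
  moreover have "card (path_words m w L) \<le> card ?D"
    using card_mono[OF _ sub] card_image_le \<open>finite ?D\<close> le_trans by blast
  ultimately show ?thesis by (simp add: card_cartesian_product q_def)
qed

definition mon_key :: "mon \<Rightarrow> (var \<times> bool list) option" where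
  "mon_key M = map_option (\<lambda>(h, r). (h, map is_even_var r)) (left_normed_form M)"

definition mon_vars :: "nat \<Rightarrow> nat \<Rightarrow> var set" where
  "mon_vars k l = X ` {1..k} \<union> Y ` {1..l}"

definition mon_keys :: "nat \<Rightarrow> (nat \<Rightarrow> nat) \<Rightarrow> nat \<Rightarrow> nat \<Rightarrow> (var \<times> bool list) set" where
  "mon_keys m w k l = mon_vars k l \<times> path_words m w (k + l - 1)"

lemma Mons_left_normed_form:
  assumes "M \<in> Mons k l" and "left_normed_form M = Some (h, r)"
  shows "mset (h # r) = mset (map X [1..<k + 1] @ map Y [1..<l + 1])"
    and "h \<in> mon_vars k l" and "length r = k + l - 1"
proof -
  show ms: "mset (h # r) = mset (map X [1..<k + 1] @ map Y [1..<l + 1])"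
    using assms by (simp add: Mons_def leaves_left_normed_form)
  have "h \<in> set (map X [1..<k + 1] @ map Y [1..<l + 1])"
    by (metis ms list.set_intros(1) set_mset_mset)
  then show "h \<in> mon_vars k l" by (auto simp: mon_vars_def)
  have "size (mset (h # r)) = k + l" by (simp only: ms) simp
  then show "length r = k + l - 1" by simp
qed

text \<open>The coefficient of a left-normed monomial is a product over its right arguments,
hence invariant under permuting them.\<close>

lemma eval_mon_eq_if_same_key:
  assumes \<phi>: "\<forall>i. \<phi> i \<in> A0 m w" and \<psi>: "\<forall>i. \<psi> i \<in> A1 m w"
    and M: "M \<in> Mons k l" and M': "M' \<in> Mons k l" and key: "mon_key M = Some \<kappa>" "mon_key M' = Some \<kappa>"
  shows "eval_mon m w \<phi> \<psi> M = eval_mon m w \<phi> \<psi> M'"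
proof -
  obtain h r h' r' where ln: "left_normed_form M = Some (h, r)" and ln': "left_normed_form M' = Some (h', r')"
    using key by (auto simp: mon_key_def)
  have h: "h' = h" and par: "map is_even_var r' = map is_even_var r"
    using key ln ln' by (auto simp: mon_key_def)
  have "mset (h # r) = mset (h # r')"
    by (simp only: Mons_left_normed_form(1)[OF M ln] Mons_left_normed_form(1)[OF M' ln', unfolded h])
  then have "mset r = mset r'" by simp
  then have "prod_list (map (gen_coeff \<phi> \<psi>) r) = prod_list (map (gen_coeff \<phi> \<psi>) r')"
    by (metis mset_map prod_mset_prod_list)
  then show ?thesis
    unfolding eval_mon_left_normed[OF \<phi> \<psi> ln] eval_mon_left_normed[OF \<phi> \<psi> ln'] par h by (simp only:)
qed

lemma mon_key_in_mon_keys_if_eval_nonzero: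
  assumes m: "m \<ge> 1" and bw: "binary_word w"
    and \<phi>: "\<forall>i. \<phi> i \<in> A0 m w" and \<psi>: "\<forall>i. \<psi> i \<in> A1 m w"
    and M: "M \<in> Mons k l" and nonzero: "eval_mon m w \<phi> \<psi> M t \<noteq> 0"
  shows "mon_key M \<in> Some ` mon_keys m w k l"
proof -
  obtain h r where ln: "left_normed_form M = Some (h, r)"
    using nonzero eval_mon_not_left_normed by (metis not_Some_eq surj_pair)
  have "rmult_gens m w (map is_even_var r) (var_value \<phi> \<psi> h) t \<noteq> 0"
    using nonzero by (simp add: eval_mon_left_normed[OF \<phi> \<psi> ln])
  then obtain s where s: "s \<in> supp (var_value \<phi> \<psi> h)"
    and path: "basis_rmult_gens m w s (map is_even_var r) = Some t"
    using rmult_gens_nonzero by blast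
  have "valid_basis m w s"
    using s var_value_Aelem[OF \<phi> \<psi>] by (auto simp: Aelem_def)
  then have "map is_even_var r \<in> path_words m w (length (map is_even_var r))"
    by (rule basis_rmult_gens_in_path_words[OF m bw]) (simp add: path)
  then show ?thesis
    using ln Mons_left_normed_form(2,3)[OF M ln] by (auto simp: mon_key_def mon_keys_def)
qed

lemma finite_card_mon_keys:
  assumes "m \<ge> 1" and "finite (subwords w ((k + l - 1) div m + 2))"
  shows "finite (mon_keys m w k l)
    \<and> card (mon_keys m w k l) \<le> (k + l) * ((m + 1) * card (subwords w ((k + l - 1) div m + 2)))"
proof -
  have "card (mon_vars k l) \<le> card (X ` {1..k}) + card (Y ` {1..l})"
    unfolding mon_vars_def by (rule card_Un_le)
  also have "\<dots> \<le> k + l"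
    using card_image_le[of "{1..k}" X] card_image_le[of "{1..l}" Y] by simp
  finally have "card (mon_vars k l) \<le> k + l" .
  moreover have "finite (mon_vars k l)" by (simp add: mon_vars_def)
  ultimately show ?thesis
    using finite_card_path_words[OF assms]
    by (auto simp: mon_keys_def card_cartesian_product intro: mult_le_mono)
qed

section \<open>Bounding the graded codimension\<close>

lemma gr_codim_le:
  assumes "\<And>S. finite S \<Longrightarrow> S \<subseteq> Pspace TYPE('f) k l \<Longrightarrow> indep_mod_id m w k l S \<Longrightarrow> card S \<le> N"
  shows "gr_codim TYPE('f::field) m w k l \<le> N"
proof -
  define C where "C = {card S | S :: (mon \<Rightarrow> 'f) set. finite S \<and> S \<subseteq> Pspace TYPE('f) k l \<and> indep_mod_id m w k l S}"
  have "\<forall>c\<in>C. c \<le> N" using assms by (auto simp: C_def)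
  moreover then have "finite C" by (meson finite_nat_set_iff_bounded_le)
  moreover have "0 \<in> C" unfolding C_def
    by (rule CollectI, rule exI[of _ "{}"]) (auto simp: Pspace_def indep_mod_id_def)
  ultimately have "Max C \<le> N" by (intro Max.boundedI) auto
  then show ?thesis by (simp add: gr_codim_def C_def)
qed

lemma is_gr_identity_if_key_sums_vanish:
  fixes g :: "mon \<Rightarrow> 'f::field"
  assumes m: "m \<ge> 1" and bw: "binary_word w"
    and vanish: "\<And>\<kappa>. \<kappa> \<in> mon_keys m w k l \<Longrightarrow> (\<Sum>M\<in>{M \<in> Mons k l. mon_key M = Some \<kappa>}. g M) = 0"
  shows "is_gr_identity m w k l g"
  unfolding is_gr_identity_def
proof (intro allI impI ext)
  fix \<phi> \<psi> :: "nat \<Rightarrow> bidx \<Rightarrow> 'f" and t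
  assume \<phi>: "\<forall>i. \<phi> i \<in> A0 m w" and \<psi>: "\<forall>i. \<psi> i \<in> A1 m w"
  let ?ev = "\<lambda>M. eval_mon m w \<phi> \<psi> M t"
  define Ms where "Ms = {M \<in> Mons k l. mon_key M \<in> Some ` mon_keys m w k l}"
  show "eval_poly m w k l g \<phi> \<psi> t = 0"
  proof (cases "finite (Mons k l)")
    case False
    then show ?thesis by (simp add: eval_poly_def)
  next
    case True
    then have "finite Ms" by (simp add: Ms_def)
    have "eval_poly m w k l g \<phi> \<psi> t = (\<Sum>M\<in>Mons k l. g M * ?ev M)"
      by (simp add: eval_poly_def)
    also have "\<dots> = (\<Sum>M\<in>Ms. g M * ?ev M)"
    proof (rule sum.mono_neutral_right[OF True])
      show "Ms \<subseteq> Mons k l" by (simp add: Ms_def)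
      show "\<forall>M\<in>Mons k l - Ms. g M * ?ev M = 0"
      proof
        fix M assume "M \<in> Mons k l - Ms"
        then have "?ev M = 0"
          using mon_key_in_mon_keys_if_eval_nonzero[OF m bw \<phi> \<psi>] unfolding Ms_def by blast
        then show "g M * ?ev M = 0" by simp
      qed
    qed
    also have "\<dots> = (\<Sum>y\<in>mon_key ` Ms. \<Sum>M\<in>{M \<in> Ms. mon_key M = y}. g M * ?ev M)"
      by (intro sum.group[symmetric]) (auto simp: \<open>finite Ms\<close>)
    also have "\<dots> = 0"
    proof (rule sum.neutral, rule ballI)
      fix y assume "y \<in> mon_key ` Ms"
      then obtain M0 \<kappa> where M0: "M0 \<in> Mons k l" "mon_key M0 = Some \<kappa>" "y = Some \<kappa>"
        and \<kappa>: "\<kappa> \<in> mon_keys m w k l"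
        by (auto simp: Ms_def)
      have group: "{M \<in> Ms. mon_key M = y} = {M \<in> Mons k l. mon_key M = Some \<kappa>}"
        using M0(3) \<kappa> by (auto simp: Ms_def)
      have "?ev M = ?ev M0" if "M \<in> Mons k l" "mon_key M = Some \<kappa>" for M
        using eval_mon_eq_if_same_key[OF \<phi> \<psi> that(1) M0(1) that(2) M0(2)] by simp
      then have "(\<Sum>M\<in>{M \<in> Ms. mon_key M = y}. g M * ?ev M)
          = (\<Sum>M\<in>{M \<in> Mons k l. mon_key M = Some \<kappa>}. g M * ?ev M0)"
        unfolding group by (intro sum.cong) auto
      also have "\<dots> = (\<Sum>M\<in>{M \<in> Mons k l. mon_key M = Some \<kappa>}. g M) * ?ev M0"
        by (simp add: sum_distrib_right)
      finally show "(\<Sum>M\<in>{M \<in> Ms. mon_key M = y}. g M * ?ev M) = 0"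
        using vanish[OF \<kappa>] by simp
    qed
    finally show ?thesis .
  qed
qed

lemma gr_codim_le_card_mon_keys:
  assumes m: "m \<ge> 1" and bw: "binary_word w" and fin: "finite (mon_keys m w k l)"
  shows "gr_codim TYPE('f::field) m w k l \<le> card (mon_keys m w k l)"
proof (rule gr_codim_le)
  fix S :: "(mon \<Rightarrow> 'f) set" assume S: "finite S" and "indep_mod_id m w k l S"
  define coord :: "(mon \<Rightarrow> 'f) \<Rightarrow> var \<times> bool list \<Rightarrow> 'f" where
    "coord f \<kappa> = (if \<kappa> \<in> mon_keys m w k l then \<Sum>M\<in>{M \<in> Mons k l. mon_key M = Some \<kappa>}. f M else 0)"
    for f \<kappa>
  show "card S \<le> card (mon_keys m w k l)"
  proof (rule card_le_card_coordinates[OF fin S, where coord = coord and ident = "is_gr_identity m w k l"])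
    show "coord f \<kappa> = 0" if "\<kappa> \<notin> mon_keys m w k l" for f \<kappa>
      using that by (simp add: coord_def)
    show "coord (\<lambda>M. \<Sum>f\<in>S. c f * f M) = (\<lambda>\<kappa>. \<Sum>f\<in>S. c f * coord f \<kappa>)" for c
      unfolding coord_def by (rule ext) (auto simp: sum_distrib_left intro: sum.swap)
    show "is_gr_identity m w k l g" if "coord g = (\<lambda>_. 0)" for g
    proof (rule is_gr_identity_if_key_sums_vanish[OF m bw])
      fix \<kappa> assume "\<kappa> \<in> mon_keys m w k l"
      then show "(\<Sum>M\<in>{M \<in> Mons k l. mon_key M = Some \<kappa>}. g M) = 0"
        using fun_cong[OF that, of \<kappa>] by (simp add: coord_def)
    qed
    show "\<forall>f\<in>S. c f = 0" if "is_gr_identity m w k l (\<lambda>M. \<Sum>f\<in>S. c f * f M)" for c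
      using that \<open>indep_mod_id m w k l S\<close> by (simp add: indep_mod_id_def)
  qed
qed

lemma gr_codim_le_factor_count:
  assumes "m \<ge> 1" and "binary_word w" and "k \<le> n" and "finite (subwords w ((n - 1) div m + 2))"
  shows "gr_codim TYPE('f::field) m w k (n - k) \<le> n * ((m + 1) * card (subwords w ((n - 1) div m + 2)))"
proof -
  have n: "k + (n - k) = n" using assms(3) by simp
  note keys = finite_card_mon_keys[OF assms(1), where k = k and l = "n - k", unfolded n, OF assms(4)]
  then show ?thesis using gr_codim_le_card_mon_keys[OF assms(1,2)] le_trans by blast
qed

section \<open>Factor complexity of periodic and Sturmian words\<close>

lemma periodic_word_shift:
  fixes c :: nat
  assumes "\<forall>i\<ge>1. w (i + p) = w i" and "i \<ge> 1"
  shows "w (i + c * p) = w i"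
proof (induction c)
  case (Suc c)
  have "w (i + Suc c * p) = w ((i + c * p) + p)" by (simp add: algebra_simps)
  also have "\<dots> = w (i + c * p)" using assms by simp
  finally show ?case using Suc by simp
qed simp

lemma finite_card_subwords_periodic:
  assumes p: "p > 0" and period: "\<forall>i\<ge>1. w (i + p) = w i"
  shows "finite (subwords w q) \<and> card (subwords w q) \<le> p"
proof -
  have sub: "subwords w q \<subseteq> (\<lambda>i. map w [i..<i + q]) ` {1..p}"
  proof
    fix u assume "u \<in> subwords w q"
    then obtain i where i: "i \<ge> 1" and u: "u = map w [i..<i + q]" by (auto simp: subwords_def)
    define i0 where "i0 = (i - 1) mod p + 1"
    have i0: "i0 \<in> {1..p}" using p by (simp add: i0_def Suc_leI)
    have "w (i + d) = w (i0 + d)" for d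
    proof -
      have "i + d = (i0 + d) + ((i - 1) div p) * p" using i by (simp add: i0_def)
      then have "w (i + d) = w ((i0 + d) + ((i - 1) div p) * p)" by (simp only:)
      also have "\<dots> = w (i0 + d)" by (rule periodic_word_shift[OF period]) (simp add: i0_def)
      finally show ?thesis .
    qed
    then have "u = map w [i0..<i0 + q]" unfolding u by (intro nth_equalityI) simp_all
    with i0 show "u \<in> (\<lambda>i. map w [i..<i + q]) ` {1..p}" by blast
  qed
  have "card (subwords w q) \<le> card ((\<lambda>i. map w [i..<i + q]) ` {1..p})"
    using sub by (rule card_mono[rotated]) simp
  also have "\<dots> \<le> card {1..p}" by (rule card_image_le) simp
  finally show ?thesis using finite_subset[OF sub] by simp
qed

lemma sturmian_factor_bound:
  fixes m n :: nat
  assumes m: "m \<ge> 2" and n: "n \<ge> 6 * m + 6"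
  shows "(m + 1) * ((n - 1) div m + 3) \<le> 2 * n"
proof -
  define d where "d = (n - 1) div m"
  have "m * d \<le> n - 1" unfolding d_def by (simp add: mult.commute)
  moreover have "2 * d \<le> m * d" using m by (simp add: mult_right_mono)
  moreover have "(m + 1) * (d + 3) = m * d + d + 3 * m + 3" by (simp add: algebra_simps)
  ultimately show ?thesis unfolding d_def[symmetric] using n by linarith
qed

lemma factor_count_linear:
  assumes m: "m \<ge> 2" and "periodic_word w \<or> sturmian w"
  shows "\<exists>n0. \<forall>n\<ge>n0. finite (subwords w ((n - 1) div m + 2))
    \<and> (m + 1) * card (subwords w ((n - 1) div m + 2)) \<le> 2 * n"
  using assms(2)
proof
  assume "periodic_word w"
  then obtain p where "p > 0" "\<forall>i\<ge>1. w (i + p) = w i" by (auto simp: periodic_word_def)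
  note subwords = finite_card_subwords_periodic[OF this]
  have "(m + 1) * card (subwords w ((n - 1) div m + 2)) \<le> 2 * n" if "n \<ge> (m + 1) * p" for n
  proof -
    have "(m + 1) * card (subwords w ((n - 1) div m + 2)) \<le> (m + 1) * p"
      using subwords by (intro mult_le_mono2) blast
    with that show ?thesis by linarith
  qed
  then show ?thesis using subwords by blast
next
  assume sturmian: "sturmian w"
  show ?thesis
  proof (intro exI allI impI conjI)
    fix n assume n: "6 * m + 6 \<le> n"
    show "finite (subwords w ((n - 1) div m + 2))"
      using sturmian by (simp add: sturmian_def)
    have "card (subwords w ((n - 1) div m + 2)) = (n - 1) div m + 3"
      using sturmian by (simp add: sturmian_def)
    then show "(m + 1) * card (subwords w ((n - 1) div m + 2)) \<le> 2 * n"
      using sturmian_factor_bound[OF m n] by (simp only:)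
  qed
qed

theorem lemma1:
  fixes m :: nat and w :: "nat \<Rightarrow> nat"
  assumes "m \<ge> 2"
    and "binary_word w"
    and "periodic_word w \<or> sturmian w"
  shows "\<exists>n0. \<forall>n\<ge>n0. \<forall>k\<le>n.
           gr_codim TYPE('f::field_char_0) m w k (n - k) \<le> 2 * n ^ 2"
proof -
  obtain n0 where n0: "\<And>n. n \<ge> n0 \<Longrightarrow> finite (subwords w ((n - 1) div m + 2))
      \<and> (m + 1) * card (subwords w ((n - 1) div m + 2)) \<le> 2 * n"
    using factor_count_linear[OF assms(1,3)] by blast
  have "gr_codim TYPE('f) m w k (n - k) \<le> 2 * n ^ 2" if "n \<ge> n0" and "k \<le> n" for n k
  proof -
    have "gr_codim TYPE('f) m w k (n - k) \<le> n * ((m + 1) * card (subwords w ((n - 1) div m + 2)))"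
      using gr_codim_le_factor_count[of m w k n] assms(1,2) that(2) n0[OF that(1)] by simp
    also have "\<dots> \<le> n * (2 * n)" using n0[OF that(1)] by simp
    finally show ?thesis by (simp add: power2_eq_square)
  qed
  then show ?thesis by blast
qed

end
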